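(* Let $X$ be a bounded degree simplicial complex, and let $X^{\leq 1}$ denote its $1$-skeleton (a bounded degree graph). Then ${}_s\mathrm{TO}^1_X(r)\simeq \mathrm{cw}_{X^{\leq 1}}(r)$.
   Context: A simplicial complex is the topological realisation of an abstract simplicial complex $(S,\mathcal S)$ ($\mathcal S$ a family of finite subsets of $S$ containing singletons, closed under subsets); it is bounded degree if $S$ is countable and $\max_s|\{t\ne s:\{s,t\}\in\mathcal S\}|<\infty$. $|Z|$ is the number of $0$-simplices; closed simplices are sets of points whose support lies in a fixed element of $\mathcal S$; $Z\le X$ means an injection of $0$-simplices sending simplices to simplices (for graphs: $Z$ is isomorphic to a subgraph). For finite $Z$ and continuous $f:Z\to\mathbb R^q$, ${}_s\mathrm{Ov}(f)=\max_{z}|\{\sigma\text{ closed simplex of }Z: z\in f(\sigma)\}|$, ${}_s\mathrm{TO}^q(Z)=\min_f {}_s\mathrm{Ov}(f)$, ${}_s\mathrm{TO}^q_X(r)=\max\{{}_s\mathrm{TO}^q(Z): Z\le X, |Z|\le r\}$. For a finite graph $\Gamma$ with $r$ vertices, the cutwidth $\mathrm{cw}(\Gamma)$ is the minimum over bijections $\sigma:V\Gamma\to\{1,\dots,r\}$ of $\max_i|\{vw\in E\Gamma:\sigma(v)<i\le\sigma(w)\}|$. For a graph $X$, $\mathrm{cw}_X(r)=\max\{\mathrm{cw}(\Gamma):\Gamma\le X, |\Gamma|\le r\}$. $f\lesssim g$ means there is $C$ with $f(r)\le Cg(Cr)+C$ for all $r$; $f\simeq g$ means both directions hold. *)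

theory Defs
  imports "HOL-Analysis.Analysis"
begin

definition abs_simplicial_complex :: "'a set \<Rightarrow> 'a set set \<Rightarrow> bool" where
  "abs_simplicial_complex V S \<longleftrightarrow>
     (\<forall>F\<in>S. finite F \<and> F \<subseteq> V) \<and> (\<forall>v\<in>V. {v} \<in> S) \<and> (\<forall>F\<in>S. \<forall>G. G \<subseteq> F \<longrightarrow> G \<in> S)"

definition bounded_degree :: "'a set \<Rightarrow> 'a set set \<Rightarrow> bool" where
  "bounded_degree V S \<longleftrightarrow> countable V \<and>
     (\<exists>d::nat. \<forall>s\<in>V. finite {t. t \<noteq> s \<and> {s, t} \<in> S} \<and> card {t. t \<noteq> s \<and> {s, t} \<in> S} \<le> d)"

definition realisation :: "'a set \<Rightarrow> 'a set set \<Rightarrow> ('a \<Rightarrow> real) set" where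
  "realisation V S = {x. (\<forall>v. 0 \<le> x v) \<and> {v. x v \<noteq> 0} \<in> S \<and> (\<Sum>v\<in>{v. x v \<noteq> 0}. x v) = 1}"

definition closed_simplex :: "'a set \<Rightarrow> 'a set set \<Rightarrow> 'a set \<Rightarrow> ('a \<Rightarrow> real) set" where
  "closed_simplex V S F = {x \<in> realisation V S. {v. x v \<noteq> 0} \<subseteq> F}"

definition closed_simplices :: "'a set \<Rightarrow> 'a set set \<Rightarrow> ('a \<Rightarrow> real) set set" where
  "closed_simplices V S = closed_simplex V S ` S"

text \<open>Topology on the realisation (for a finite complex this is the usual topology):
subspace of the product topology.\<close>

definition realisation_top :: "'a set \<Rightarrow> 'a set set \<Rightarrow> ('a \<Rightarrow> real) topology" where
  "realisation_top V S = subtopology (powertop_real UNIV) (realisation V S)"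

definition sOv :: "'a set \<Rightarrow> 'a set set \<Rightarrow> (('a \<Rightarrow> real) \<Rightarrow> 'b::euclidean_space) \<Rightarrow> nat" where
  "sOv V S f = Max ((\<lambda>z. card {\<sigma> \<in> closed_simplices V S. z \<in> f ` \<sigma>}) ` UNIV)"

definition sTO :: "'a set \<Rightarrow> 'a set set \<Rightarrow> 'b::euclidean_space itself \<Rightarrow> nat" where
  "sTO V S _ = (LEAST n. \<exists>f :: ('a \<Rightarrow> real) \<Rightarrow> 'b.
        continuous_map (realisation_top V S) euclidean f \<and> sOv V S f = n)"

text \<open>Subcomplexes (a finite Z embeds into X iff it is isomorphic to a subcomplex of X).\<close>

definition subcomplex :: "'a set \<Rightarrow> 'a set set \<Rightarrow> 'a set \<Rightarrow> 'a set set \<Rightarrow> bool" where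
  "subcomplex V' S' V S \<longleftrightarrow> V' \<subseteq> V \<and> S' \<subseteq> S \<and> abs_simplicial_complex V' S'"

definition sTO_X :: "'a set \<Rightarrow> 'a set set \<Rightarrow> 'b::euclidean_space itself \<Rightarrow> nat \<Rightarrow> nat" where
  "sTO_X V S q r = Sup {sTO V' S' q | V' S'. subcomplex V' S' V S \<and> finite V' \<and> card V' \<le> r}"

definition cutwidth :: "'a set \<Rightarrow> 'a set set \<Rightarrow> nat" where
  "cutwidth V E = (LEAST n. \<exists>\<sigma>. bij_betw \<sigma> V {1..card V} \<and>
      n = Max (insert 0 ((\<lambda>i. card {e \<in> E. \<exists>v w. e = {v, w} \<and> \<sigma> v < i \<and> i \<le> \<sigma> w}) ` {1..card V})))"

definition skeleton1_edges :: "'a set set \<Rightarrow> 'a set set" where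
  "skeleton1_edges S = {{s, t} | s t. s \<noteq> t \<and> {s, t} \<in> S}"

definition subgraph :: "'a set \<Rightarrow> 'a set set \<Rightarrow> 'a set \<Rightarrow> 'a set set \<Rightarrow> bool" where
  "subgraph V' E' V E \<longleftrightarrow> V' \<subseteq> V \<and> E' \<subseteq> E \<and> (\<forall>e\<in>E'. e \<subseteq> V')"

definition cw_X :: "'a set \<Rightarrow> 'a set set \<Rightarrow> nat \<Rightarrow> nat" where
  "cw_X V E r = Sup {cutwidth V' E' | V' E'. subgraph V' E' V E \<and> finite V' \<and> card V' \<le> r}"

definition lesssim :: "(nat \<Rightarrow> nat) \<Rightarrow> (nat \<Rightarrow> nat) \<Rightarrow> bool" where
  "lesssim f g \<longleftrightarrow> (\<exists>C::nat. \<forall>r. f r \<le> C * g (C * r) + C)"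

definition asymp_equiv_fun :: "(nat \<Rightarrow> nat) \<Rightarrow> (nat \<Rightarrow> nat) \<Rightarrow> bool" where
  "asymp_equiv_fun f g \<longleftrightarrow> lesssim f g \<and> lesssim g f"

end

theory Submission
  imports Defs
begin

(* Lower bound. View a subgraph of the 1-skeleton as a 1-dimensional subcomplex. Given a continuous
   f into R, number the vertices in increasing order of their f-values. At the cut before the
   vertex u, every crossing edge joins a vertex with smaller value to one with larger value, so by
   the intermediate value theorem its closed simplex covers f(u); distinct edges are distinct
   simplices, hence the overlap is at least the cutwidth.

   Upper bound. For a finite subcomplex, take a numbering sigma of the vertices realising the
   cutwidth of its 1-skeleton and extend it affinely, f(x) = sum_v x_v sigma(v). A face whose image
   contains z has vertices a, b with sigma a <= z <= sigma b, so it contains the vertex numbered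
   ceiling z or an edge of the cut at ceiling z. In a complex of degree at most d, every vertex
   lies in at most 2^(d+1) faces, so the overlap is at most 2^(d+1) (1 + cutwidth). *)

lemma face_subset_vertices:
  assumes "abs_simplicial_complex V S" and "F \<in> S"
  shows "F \<subseteq> V"
  using assms by (simp add: abs_simplicial_complex_def)

lemma subface_in_faces:
  assumes "abs_simplicial_complex V S" and "F \<in> S" and "G \<subseteq> F"
  shows "G \<in> S"
  using assms by (simp add: abs_simplicial_complex_def)

lemma finite_faces:
  assumes "abs_simplicial_complex V S" and "finite V"
  shows "finite S"
proof -
  have "S \<subseteq> Pow V"
    using face_subset_vertices[OF assms(1)] by blast
  then show ?thesis
    using assms(2) by (simp add: finite_subset)
qed

lemma indicator_in_closed_simplex_iff:
  assumes "abs_simplicial_complex V S" and "v \<in> V"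
  shows "(indicator {v} :: 'a \<Rightarrow> real) \<in> closed_simplex V S F \<longleftrightarrow> v \<in> F"
proof -
  have "{u. (indicator {v} u :: real) \<noteq> 0} = {v}"
    by (auto simp: indicator_def)
  moreover have "{v} \<in> S"
    using assms by (simp add: abs_simplicial_complex_def)
  ultimately show ?thesis
    by (simp add: closed_simplex_def realisation_def)
qed

lemma inj_on_closed_simplex:
  assumes "abs_simplicial_complex V S"
  shows "inj_on (closed_simplex V S) S"
proof (rule inj_onI)
  fix F G assume "F \<in> S" "G \<in> S" and eq: "closed_simplex V S F = closed_simplex V S G"
  then have "F \<subseteq> V" "G \<subseteq> V"
    using face_subset_vertices[OF assms] by auto
  moreover have "v \<in> F \<longleftrightarrow> v \<in> G" if "v \<in> V" for v
    using indicator_in_closed_simplex_iff[OF assms that, of F]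
      indicator_in_closed_simplex_iff[OF assms that, of G] eq by simp
  ultimately show "F = G"
    by blast
qed

lemma card_closed_simplices_with:
  assumes "abs_simplicial_complex V S"
  shows "card {\<tau> \<in> closed_simplices V S. P \<tau>} = card {F \<in> S. P (closed_simplex V S F)}"
proof -
  have "{\<tau> \<in> closed_simplices V S. P \<tau>} = closed_simplex V S ` {F \<in> S. P (closed_simplex V S F)}"
    by (auto simp: closed_simplices_def)
  moreover have "inj_on (closed_simplex V S) {F \<in> S. P (closed_simplex V S F)}"
    using inj_on_closed_simplex[OF assms] by (rule inj_on_subset) auto
  ultimately show ?thesis
    by (simp add: card_image)
qed

lemma finite_range_card_hit:
  assumes "finite S"
  shows "finite (range (\<lambda>z. card {\<tau> \<in> closed_simplices V S. z \<in> f ` \<tau>}))"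
proof -
  have "finite (closed_simplices V S)"
    using assms by (simp add: closed_simplices_def)
  then have "range (\<lambda>z. card {\<tau> \<in> closed_simplices V S. z \<in> f ` \<tau>}) \<subseteq> {..card (closed_simplices V S)}"
    by (auto intro: card_mono)
  then show ?thesis
    by (rule finite_subset) simp
qed

lemma card_hit_faces_le_sOv:
  assumes "abs_simplicial_complex V S" and "finite S"
  shows "card {F \<in> S. z \<in> f ` closed_simplex V S F} \<le> sOv V S f"
proof -
  have "card {F \<in> S. z \<in> f ` closed_simplex V S F} = card {\<tau> \<in> closed_simplices V S. z \<in> f ` \<tau>}"
    by (simp add: card_closed_simplices_with[OF assms(1)])
  then show ?thesis
    unfolding sOv_def using finite_range_card_hit[OF assms(2)] by (intro Max_ge) auto
qed

lemma sOv_le: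
  assumes "abs_simplicial_complex V S" and "finite S"
    and "\<And>z. card {F \<in> S. z \<in> f ` closed_simplex V S F} \<le> B"
  shows "sOv V S f \<le> B"
proof -
  have "card {\<tau> \<in> closed_simplices V S. z \<in> f ` \<tau>} \<le> B" for z
    using assms(3) by (simp add: card_closed_simplices_with[OF assms(1)])
  then show ?thesis
    unfolding sOv_def using finite_range_card_hit[OF assms(2)] by (subst Max_le_iff) auto
qed

lemma sTO_le_sOv:
  fixes f :: "('a \<Rightarrow> real) \<Rightarrow> 'b::euclidean_space"
  assumes "continuous_map (realisation_top V S) euclidean f"
  shows "sTO V S TYPE('b) \<le> sOv V S f"
  unfolding sTO_def using assms by (intro Least_le) auto

lemma le_sTO:
  assumes "\<And>f :: ('a \<Rightarrow> real) \<Rightarrow> 'b::euclidean_space.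
             continuous_map (realisation_top V S) euclidean f \<Longrightarrow> c \<le> sOv V S f"
  shows "c \<le> sTO V S TYPE('b)"
proof -
  have "\<exists>n f. continuous_map (realisation_top V S) euclidean (f :: _ \<Rightarrow> 'b) \<and> sOv V S f = n"
    by (intro exI[of _ "sOv V S (\<lambda>_. 0 :: 'b)"] exI[of _ "\<lambda>_. 0 :: 'b"]) simp
  from LeastI_ex[OF this] obtain f :: "('a \<Rightarrow> real) \<Rightarrow> 'b"
    where "continuous_map (realisation_top V S) euclidean f" "sOv V S f = sTO V S TYPE('b)"
    unfolding sTO_def by blast
  with assms show ?thesis
    by metis
qed

lemma sTO_le_card_faces:
  assumes "finite S"
  shows "sTO V S TYPE('b::euclidean_space) \<le> card S"
proof -
  have "sTO V S TYPE('b) \<le> sOv V S (\<lambda>_. 0 :: 'b)"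
    by (rule sTO_le_sOv) simp
  also have "\<dots> \<le> card (closed_simplices V S)"
  proof -
    have "finite (closed_simplices V S)"
      using assms by (simp add: closed_simplices_def)
    then have "card {\<tau> \<in> closed_simplices V S. z \<in> (\<lambda>_. 0 :: 'b) ` \<tau>} \<le> card (closed_simplices V S)" for z
      by (intro card_mono) auto
    then show ?thesis
      unfolding sOv_def using finite_range_card_hit[OF assms] by (subst Max_le_iff) auto
  qed
  also have "\<dots> \<le> card S"
    unfolding closed_simplices_def using assms by (rule card_image_le)
  finally show ?thesis .
qed

section \<open>Cutwidth\<close>

lemma exists_sorting_numbering:
  fixes g :: "'a \<Rightarrow> 'b::linorder"
  assumes "finite A"
  obtains \<sigma> where "bij_betw \<sigma> A {1..card A}"
    and "\<And>u w. u \<in> A \<Longrightarrow> w \<in> A \<Longrightarrow> \<sigma> u < \<sigma> w \<Longrightarrow> g u \<le> g w"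
proof -
  obtain xs where xs: "set xs = A" "distinct xs"
    using finite_distinct_list[OF assms] by blast
  define ys where "ys = sort_key g xs"
  define h where "h k = ys ! (k - 1)" for k
  have len: "length ys = card A"
    using xs by (simp add: ys_def distinct_card[symmetric])
  have "bij_betw (\<lambda>k. k - 1) {1..card A} {..<card A}"
    by (rule bij_betw_byWitness[where f' = Suc]) auto
  moreover have "bij_betw ((!) ys) {..<card A} A"
    using xs len by (intro bij_betw_nth) (simp_all add: ys_def)
  ultimately have h: "bij_betw h {1..card A} A"
    unfolding h_def by (rule bij_betw_trans[unfolded comp_def])
  show thesis
  proof
    show \<sigma>: "bij_betw (the_inv_into {1..card A} h) A {1..card A}"
      using h by (rule bij_betw_the_inv_into)
    fix u w assume uw: "u \<in> A" "w \<in> A" "the_inv_into {1..card A} h u < the_inv_into {1..card A} h w"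
    let ?i = "the_inv_into {1..card A} h u" and ?j = "the_inv_into {1..card A} h w"
    have ij: "?i \<in> {1..card A}" "?j \<in> {1..card A}"
      using \<sigma> uw by (auto simp: bij_betw_def)
    have "h ?i = u" "h ?j = w"
      using h uw by (auto simp: bij_betw_def f_the_inv_into_f)
    moreover have "map g ys ! (?i - 1) \<le> map g ys ! (?j - 1)"
      using ij uw(3) len by (intro sorted_nth_mono) (auto simp: ys_def)
    ultimately show "g u \<le> g w"
      using ij len by (auto simp: h_def)
  qed
qed

definition edge_cut :: "('a \<Rightarrow> nat) \<Rightarrow> 'a set set \<Rightarrow> nat \<Rightarrow> 'a set set" where
  "edge_cut \<sigma> E i = {e \<in> E. \<exists>v w. e = {v, w} \<and> \<sigma> v < i \<and> i \<le> \<sigma> w}"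

lemma cutwidth_eq_edge_cut:
  "cutwidth V E = (LEAST n. \<exists>\<sigma>. bij_betw \<sigma> V {1..card V} \<and>
      n = Max (insert 0 ((\<lambda>i. card (edge_cut \<sigma> E i)) ` {1..card V})))"
  unfolding cutwidth_def edge_cut_def ..

lemma cutwidth_le:
  assumes "bij_betw \<sigma> V {1..card V}"
    and "\<And>i. i \<in> {1..card V} \<Longrightarrow> card (edge_cut \<sigma> E i) \<le> B"
  shows "cutwidth V E \<le> B"
proof -
  have "cutwidth V E \<le> Max (insert 0 ((\<lambda>i. card (edge_cut \<sigma> E i)) ` {1..card V}))"
    unfolding cutwidth_eq_edge_cut using assms(1) by (intro Least_le) blast
  also have "\<dots> \<le> B"
    using assms(2) by (subst Max_le_iff) auto
  finally show ?thesis .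
qed

lemma cutwidth_attained:
  assumes "finite V" and "\<forall>e\<in>E. e \<subseteq> V"
  obtains \<sigma> where "bij_betw \<sigma> V {1..card V}" and "\<And>i. card (edge_cut \<sigma> E i) \<le> cutwidth V E"
proof -
  obtain \<sigma>\<^sub>0 where "bij_betw \<sigma>\<^sub>0 V {1..card V}"
    using exists_sorting_numbering[OF assms(1), of "\<lambda>_. 0 :: nat"] by blast
  then have "\<exists>n \<sigma>. bij_betw \<sigma> V {1..card V} \<and>
      n = Max (insert 0 ((\<lambda>i. card (edge_cut \<sigma> E i)) ` {1..card V}))"
    by blast
  from LeastI_ex[OF this] obtain \<sigma> where \<sigma>: "bij_betw \<sigma> V {1..card V}"
    and cw: "cutwidth V E = Max (insert 0 ((\<lambda>i. card (edge_cut \<sigma> E i)) ` {1..card V}))"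
    unfolding cutwidth_eq_edge_cut by blast
  have "card (edge_cut \<sigma> E i) \<le> cutwidth V E" for i
  proof (cases "i \<in> {1..card V}")
    case True
    then show ?thesis unfolding cw by (intro Max_ge) auto
  next
    case False
    have "\<sigma> v \<in> {1..card V}" if "v \<in> V" for v
      using \<sigma> that by (auto simp: bij_betw_def)
    then have "\<not> (\<sigma> v < i \<and> i \<le> \<sigma> w)" if "v \<in> V" "w \<in> V" for v w
      using False that by fastforce
    then have "edge_cut \<sigma> E i = {}"
      using assms(2) unfolding edge_cut_def by blast
    then show ?thesis by simp
  qed
  with \<sigma> that show thesis by blast
qed

lemma cutwidth_le_card:
  assumes "finite V" and "finite E"
  shows "cutwidth V E \<le> card E"
proof -
  obtain \<sigma> where "bij_betw \<sigma> V {1..card V}"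
    using exists_sorting_numbering[OF assms(1), of "\<lambda>_. 0 :: nat"] by blast
  then show ?thesis
    by (rule cutwidth_le) (use assms(2) in \<open>auto simp: edge_cut_def intro: card_mono\<close>)
qed

lemma card_le_two_power_if_subset_Pow:
  assumes "A \<subseteq> Pow V" and "finite V" and "card V \<le> r"
  shows "card A \<le> 2 ^ r"
proof -
  have "card A \<le> card (Pow V)"
    using assms by (intro card_mono) auto
  also have "\<dots> \<le> 2 ^ r"
    using assms by (simp add: card_Pow power_increasing)
  finally show ?thesis .
qed

lemma sTO_le_sTO_X:
  assumes "subcomplex V' S' V S" and "finite V'" and "card V' \<le> r"
  shows "sTO V' S' TYPE('b::euclidean_space) \<le> sTO_X V S TYPE('b) r"
  unfolding sTO_X_def
proof (rule cSup_upper)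
  show "sTO V' S' TYPE('b) \<in> {sTO V' S' TYPE('b) | V' S'. subcomplex V' S' V S \<and> finite V' \<and> card V' \<le> r}"
    using assms by blast
  show "bdd_above {sTO V' S' TYPE('b) | V' S'. subcomplex V' S' V S \<and> finite V' \<and> card V' \<le> r}"
  proof (rule bdd_aboveI)
    fix t assume "t \<in> {sTO V' S' TYPE('b) | V' S'. subcomplex V' S' V S \<and> finite V' \<and> card V' \<le> r}"
    then obtain V' S' where t: "t = sTO V' S' TYPE('b)" "subcomplex V' S' V S" "finite V'" "card V' \<le> r"
      by blast
    then have "S' \<subseteq> Pow V'"
      by (auto simp: subcomplex_def abs_simplicial_complex_def)
    then have "finite S'"
      using t(3) by (simp add: finite_subset)
    then have "t \<le> card S'"
      unfolding t(1) by (rule sTO_le_card_faces)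
    also have "\<dots> \<le> 2 ^ r"
      using \<open>S' \<subseteq> Pow V'\<close> t(3,4) by (rule card_le_two_power_if_subset_Pow)
    finally show "t \<le> 2 ^ r" .
  qed
qed

lemma sTO_X_le:
  assumes "\<And>V' S'. subcomplex V' S' V S \<Longrightarrow> finite V' \<Longrightarrow> card V' \<le> r \<Longrightarrow> sTO V' S' TYPE('b::euclidean_space) \<le> B"
  shows "sTO_X V S TYPE('b) r \<le> B"
  unfolding sTO_X_def
proof (rule cSup_least)
  have "subcomplex {} {} V S"
    by (simp add: subcomplex_def abs_simplicial_complex_def)
  then show "{sTO V' S' TYPE('b) | V' S'. subcomplex V' S' V S \<and> finite V' \<and> card V' \<le> r} \<noteq> {}"
    by fastforce
qed (use assms in blast)

lemma cutwidth_le_cw_X: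
  assumes "subgraph V' E' V E" and "finite V'" and "card V' \<le> r"
  shows "cutwidth V' E' \<le> cw_X V E r"
  unfolding cw_X_def
proof (rule cSup_upper)
  show "cutwidth V' E' \<in> {cutwidth V' E' | V' E'. subgraph V' E' V E \<and> finite V' \<and> card V' \<le> r}"
    using assms by blast
  show "bdd_above {cutwidth V' E' | V' E'. subgraph V' E' V E \<and> finite V' \<and> card V' \<le> r}"
  proof (rule bdd_aboveI)
    fix t assume "t \<in> {cutwidth V' E' | V' E'. subgraph V' E' V E \<and> finite V' \<and> card V' \<le> r}"
    then obtain V' E' where t: "t = cutwidth V' E'" "subgraph V' E' V E" "finite V'" "card V' \<le> r"
      by blast
    then have "E' \<subseteq> Pow V'"
      by (auto simp: subgraph_def)
    then have "finite E'"
      using t(3) by (simp add: finite_subset)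
    with t(3) have "t \<le> card E'"
      unfolding t(1) by (rule cutwidth_le_card)
    also have "\<dots> \<le> 2 ^ r"
      using \<open>E' \<subseteq> Pow V'\<close> t(3,4) by (rule card_le_two_power_if_subset_Pow)
    finally show "t \<le> 2 ^ r" .
  qed
qed

lemma cw_X_le:
  assumes "\<And>V' E'. subgraph V' E' V E \<Longrightarrow> finite V' \<Longrightarrow> card V' \<le> r \<Longrightarrow> cutwidth V' E' \<le> B"
  shows "cw_X V E r \<le> B"
  unfolding cw_X_def
proof (rule cSup_least)
  have "subgraph {} {} V E"
    by (simp add: subgraph_def)
  then show "{cutwidth V' E' | V' E'. subgraph V' E' V E \<and> finite V' \<and> card V' \<le> r} \<noteq> {}"
    by fastforce
qed (use assms in blast)

lemma cw_X_mono:
  assumes "r \<le> r'"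
  shows "cw_X V E r \<le> cw_X V E r'"
  using assms by (intro cw_X_le cutwidth_le_cw_X) auto

lemma subgraph_skeleton1_edges:
  assumes "subcomplex V' S' V S"
  shows "subgraph V' (skeleton1_edges S') V (skeleton1_edges S)"
proof -
  have "V' \<subseteq> V" "S' \<subseteq> S" "\<forall>F\<in>S'. F \<subseteq> V'"
    using assms by (auto simp: subcomplex_def abs_simplicial_complex_def)
  then show ?thesis
    unfolding subgraph_def skeleton1_edges_def by blast
qed

section \<open>Lower bound\<close>

lemma edge_point_in_closed_simplex:
  assumes "abs_simplicial_complex V S" and "{v, w} \<in> S" and "v \<noteq> w" and "t \<in> {0..1}"
  shows "(\<lambda>u. (1 - t) * indicator {v} u + t * indicator {w} u) \<in> closed_simplex V S {v, w}"
    (is "?p \<in> _")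
proof -
  have supp: "{u. ?p u \<noteq> 0} \<subseteq> {v, w}"
    by (auto simp: indicator_def)
  then have "{u. ?p u \<noteq> 0} \<in> S"
    by (rule subface_in_faces[OF assms(1,2)])
  moreover have "(\<Sum>u\<in>{u. ?p u \<noteq> 0}. ?p u) = (\<Sum>u\<in>{v, w}. ?p u)"
    using supp by (intro sum.mono_neutral_left) auto
  moreover have "(\<Sum>u\<in>{v, w}. ?p u) = 1"
    using assms(3) by simp
  moreover have "0 \<le> ?p u" for u
    using assms(4) by (simp add: indicator_def)
  ultimately show ?thesis
    using supp by (auto simp: closed_simplex_def realisation_def)
qed

lemma closed_simplex_edge_ivt:
  fixes f :: "('a \<Rightarrow> real) \<Rightarrow> real"
  assumes K: "abs_simplicial_complex V S" and "{v, w} \<in> S" and "v \<noteq> w"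
    and f: "continuous_map (realisation_top V S) euclidean f"
    and "f (indicator {v}) \<le> z" and "z \<le> f (indicator {w})"
  shows "z \<in> f ` closed_simplex V S {v, w}"
proof -
  define p where "p t = (\<lambda>u. (1 - t) * indicator {v} u + t * indicator {w} u)" for t :: real
  have p_in: "p t \<in> closed_simplex V S {v, w}" if "t \<in> {0..1}" for t
    unfolding p_def using K assms(2,3) that by (rule edge_point_in_closed_simplex)
  have "continuous_map (top_of_set {0..1}) (powertop_real UNIV) p"
    unfolding continuous_map_componentwise_UNIV p_def by (auto intro!: continuous_intros)
  then have "continuous_map (top_of_set {0..1}) (realisation_top V S) p"
    using p_in unfolding realisation_top_def
    by (auto simp: continuous_map_in_subtopology closed_simplex_def)
  then have "continuous_map (top_of_set {0..1}) euclidean (f \<circ> p)"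
    using f by (rule continuous_map_compose)
  then have "continuous_on {0..1} (f \<circ> p)"
    by simp
  moreover have "p 0 = indicator {v}" "p 1 = indicator {w}"
    by (simp_all add: p_def)
  ultimately obtain t where "t \<in> {0..1}" "f (p t) = z"
    using IVT'[of "f \<circ> p" 0 z 1] assms(5,6) by auto
  then show ?thesis
    using p_in by blast
qed

definition graph_complex :: "'a set \<Rightarrow> 'a set set \<Rightarrow> 'a set set" where
  "graph_complex V E = {F. \<exists>v\<in>V. F \<subseteq> {v}} \<union> {F. \<exists>e\<in>E. F \<subseteq> e}"

lemma abs_simplicial_complex_graph_complex:
  assumes "finite V" and "\<forall>e\<in>E. e \<subseteq> V"
  shows "abs_simplicial_complex V (graph_complex V E)"
proof -
  have "F \<subseteq> V" if "F \<in> graph_complex V E" for F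
    using that assms(2) by (auto simp: graph_complex_def)
  moreover have "G \<in> graph_complex V E" if "F \<in> graph_complex V E" and "G \<subseteq> F" for F G
    using that unfolding graph_complex_def by blast
  moreover have "{v} \<in> graph_complex V E" if "v \<in> V" for v
    using that by (auto simp: graph_complex_def)
  ultimately show ?thesis
    unfolding abs_simplicial_complex_def using assms(1) by (meson finite_subset)
qed

lemma subcomplex_graph_complex:
  assumes "abs_simplicial_complex V S" and "subgraph V' E' V (skeleton1_edges S)" and "finite V'"
  shows "subcomplex V' (graph_complex V' E') V S"
proof -
  have "{v} \<in> S" if "v \<in> V'" for v
    using assms(1,2) that by (auto simp: abs_simplicial_complex_def subgraph_def)
  moreover have "e \<in> S" if "e \<in> E'" for e
    using assms(2) that by (auto simp: subgraph_def skeleton1_edges_def)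
  ultimately have "graph_complex V' E' \<subseteq> S"
  proof (intro subsetI)
    fix G assume "G \<in> graph_complex V' E'"
    with \<open>\<And>v. v \<in> V' \<Longrightarrow> {v} \<in> S\<close> \<open>\<And>e. e \<in> E' \<Longrightarrow> e \<in> S\<close>
    obtain F where "F \<in> S" "G \<subseteq> F"
      unfolding graph_complex_def by blast
    then show "G \<in> S"
      by (rule subface_in_faces[OF assms(1)])
  qed
  moreover have "abs_simplicial_complex V' (graph_complex V' E')"
    using assms(2,3) by (intro abs_simplicial_complex_graph_complex) (auto simp: subgraph_def)
  ultimately show ?thesis
    using assms(2) by (simp add: subcomplex_def subgraph_def)
qed

lemma edge_cut_covers_vertex_value:
  fixes f :: "('a \<Rightarrow> real) \<Rightarrow> real"
  assumes K: "abs_simplicial_complex V S" and f: "continuous_map (realisation_top V S) euclidean f"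
    and "E \<subseteq> S" and "inj_on \<sigma> V" and "u \<in> V"
    and mono: "\<And>v w. v \<in> V \<Longrightarrow> w \<in> V \<Longrightarrow> \<sigma> v < \<sigma> w \<Longrightarrow> f (indicator {v}) \<le> f (indicator {w})"
  shows "edge_cut \<sigma> E (\<sigma> u) \<subseteq> {F \<in> S. f (indicator {u}) \<in> f ` closed_simplex V S F}"
proof
  fix e assume "e \<in> edge_cut \<sigma> E (\<sigma> u)"
  then obtain a b where e: "e \<in> S" "e = {a, b}" "\<sigma> a < \<sigma> u" "\<sigma> u \<le> \<sigma> b"
    using \<open>E \<subseteq> S\<close> by (auto simp: edge_cut_def)
  then have ab: "a \<in> V" "b \<in> V" "a \<noteq> b"
    using face_subset_vertices[OF K] by auto
  have "f (indicator {a}) \<le> f (indicator {u})"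
    using mono ab \<open>u \<in> V\<close> e by auto
  moreover have "f (indicator {u}) \<le> f (indicator {b})"
  proof (cases "\<sigma> b = \<sigma> u")
    case True
    then have "b = u"
      using \<open>inj_on \<sigma> V\<close> \<open>u \<in> V\<close> ab by (auto simp: inj_on_def)
    then show ?thesis by simp
  next
    case False
    then show ?thesis
      using mono ab \<open>u \<in> V\<close> e by auto
  qed
  ultimately show "e \<in> {F \<in> S. f (indicator {u}) \<in> f ` closed_simplex V S F}"
    using closed_simplex_edge_ivt[OF K _ _ f] e ab by auto
qed

lemma cutwidth_le_sTO_graph_complex:
  assumes "finite V" and "\<forall>e\<in>E. e \<subseteq> V"
  shows "cutwidth V E \<le> sTO V (graph_complex V E) TYPE(real)"
proof (rule le_sTO)
  let ?S = "graph_complex V E"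
  fix f :: "('a \<Rightarrow> real) \<Rightarrow> real"
  assume f: "continuous_map (realisation_top V ?S) euclidean f"
  have K: "abs_simplicial_complex V ?S"
    using assms by (rule abs_simplicial_complex_graph_complex)
  have "finite ?S"
    using K assms(1) by (rule finite_faces)
  have "E \<subseteq> ?S"
    by (auto simp: graph_complex_def)
  obtain \<sigma> where \<sigma>: "bij_betw \<sigma> V {1..card V}"
    and mono: "\<And>u w. u \<in> V \<Longrightarrow> w \<in> V \<Longrightarrow> \<sigma> u < \<sigma> w \<Longrightarrow> f (indicator {u}) \<le> f (indicator {w})"
    using exists_sorting_numbering[OF assms(1), of "\<lambda>u. f (indicator {u})"] by blast
  show "cutwidth V E \<le> sOv V ?S f"
  proof (rule cutwidth_le[OF \<sigma>])
    fix i assume "i \<in> {1..card V}"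
    then have "i \<in> \<sigma> ` V"
      using \<sigma> by (simp add: bij_betw_def)
    then obtain u where "u \<in> V" "i = \<sigma> u"
      by blast
    have "card (edge_cut \<sigma> E i) \<le> card {F \<in> ?S. f (indicator {u}) \<in> f ` closed_simplex V ?S F}"
      unfolding \<open>i = \<sigma> u\<close> using \<open>finite ?S\<close> \<sigma> \<open>E \<subseteq> ?S\<close> \<open>u \<in> V\<close>
      by (intro card_mono edge_cut_covers_vertex_value[OF K f] mono) (auto simp: bij_betw_def)
    also have "\<dots> \<le> sOv V ?S f"
      using K \<open>finite ?S\<close> by (rule card_hit_faces_le_sOv)
    finally show "card (edge_cut \<sigma> E i) \<le> sOv V ?S f" .
  qed
qed

section \<open>Upper bound\<close>

lemma exists_le_convex_combination:
  fixes x h :: "'a \<Rightarrow> real"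
  assumes "finite P" and "\<forall>v\<in>P. 0 < x v" and "(\<Sum>v\<in>P. x v) = 1"
  shows "\<exists>a\<in>P. h a \<le> (\<Sum>v\<in>P. x v * h v)"
proof (rule ccontr)
  define z where "z = (\<Sum>v\<in>P. x v * h v)"
  assume "\<not> (\<exists>a\<in>P. h a \<le> (\<Sum>v\<in>P. x v * h v))"
  then have "x v * z < x v * h v" if "v \<in> P" for v
    using assms(2) that by (auto simp: z_def)
  moreover have "P \<noteq> {}"
    using assms(3) by auto
  ultimately have "(\<Sum>v\<in>P. x v * z) < (\<Sum>v\<in>P. x v * h v)"
    using assms(1) by (intro sum_strict_mono) auto
  then show False
    using assms(3) by (simp add: z_def sum_distrib_right[symmetric])
qed

lemma closed_simplex_edge_spans_value:
  fixes h :: "'a \<Rightarrow> real"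
  assumes K: "abs_simplicial_complex V S" and "finite V" and x: "x \<in> closed_simplex V S F"
  obtains a b where "{a, b} \<in> S" and "{a, b} \<subseteq> F"
    and "h a \<le> (\<Sum>v\<in>V. x v * h v)" and "(\<Sum>v\<in>V. x v * h v) \<le> h b"
proof -
  define P where "P = {v. x v \<noteq> 0}"
  have P: "P \<in> S" "P \<subseteq> F" "\<forall>v. 0 \<le> x v" "(\<Sum>v\<in>P. x v) = 1"
    using x by (auto simp: closed_simplex_def realisation_def P_def)
  have "P \<subseteq> V"
    using face_subset_vertices[OF K P(1)] .
  then have "finite P"
    using assms(2) by (rule finite_subset)
  have pos: "\<forall>v\<in>P. 0 < x v"
    using P(3) by (auto simp: P_def order_le_less)
  have sum_P: "(\<Sum>v\<in>V. x v * h v) = (\<Sum>v\<in>P. x v * h v)"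
    using assms(2) \<open>P \<subseteq> V\<close> by (intro sum.mono_neutral_right) (auto simp: P_def)
  obtain a where a: "a \<in> P" "h a \<le> (\<Sum>v\<in>P. x v * h v)"
    using exists_le_convex_combination[OF \<open>finite P\<close> pos P(4)] by blast
  obtain b where b: "b \<in> P" "- h b \<le> (\<Sum>v\<in>P. x v * - h v)"
    using exists_le_convex_combination[OF \<open>finite P\<close> pos P(4), of "\<lambda>v. - h v"] by blast
  have "{a, b} \<in> S"
    by (rule subface_in_faces[OF K P(1)]) (use a(1) b(1) in blast)
  moreover have "(\<Sum>v\<in>P. x v * h v) \<le> h b"
    using b(2) by (simp add: sum_negf)
  ultimately show thesis
    using that a b P(2) sum_P by auto
qed

lemma hit_face_meets_cut:
  assumes K: "abs_simplicial_complex V S" and "finite V"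
    and "z \<in> (\<lambda>x. \<Sum>v\<in>V. x v * real (\<sigma> v)) ` closed_simplex V S F"
  shows "(\<exists>u\<in>F. \<sigma> u = nat \<lceil>z\<rceil>) \<or> (\<exists>e\<in>edge_cut \<sigma> (skeleton1_edges S) (nat \<lceil>z\<rceil>). e \<subseteq> F)"
proof -
  obtain x where x: "x \<in> closed_simplex V S F" and z: "z = (\<Sum>v\<in>V. x v * real (\<sigma> v))"
    using assms(3) by blast
  obtain a b where ab: "{a, b} \<in> S" "{a, b} \<subseteq> F" "real (\<sigma> a) \<le> z" "z \<le> real (\<sigma> b)"
    using closed_simplex_edge_spans_value[OF K assms(2) x, of "\<lambda>v. real (\<sigma> v)"] z by blast
  have b: "nat \<lceil>z\<rceil> \<le> \<sigma> b"
    using ab(4) by simp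
  show ?thesis
  proof (cases "\<sigma> a < nat \<lceil>z\<rceil>")
    case True
    then have "{a, b} \<in> edge_cut \<sigma> (skeleton1_edges S) (nat \<lceil>z\<rceil>)"
      using ab(1) b unfolding edge_cut_def skeleton1_edges_def by fastforce
    then show ?thesis
      using ab(2) by blast
  next
    case False
    then have "\<sigma> a = nat \<lceil>z\<rceil>"
      using ab(3) real_nat_ceiling_ge[of z] by linarith
    then show ?thesis
      using ab(2) by blast
  qed
qed

lemma card_UN_le_card_mult:
  assumes "finite I" and "\<And>i. i \<in> I \<Longrightarrow> card (A i) \<le> k"
  shows "card (\<Union>i\<in>I. A i) \<le> card I * k"
proof -
  have "card (\<Union>i\<in>I. A i) \<le> (\<Sum>i\<in>I. card (A i))"
    using assms(1) by (rule card_UN_le)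
  also have "\<dots> \<le> card I * k"
    using sum_bounded_above[of I "\<lambda>i. card (A i)" k] assms(2) by simp
  finally show ?thesis .
qed

lemma card_faces_containing_edge_le:
  assumes K: "abs_simplicial_complex V S" and "finite S" and "e \<in> skeleton1_edges S"
    and star: "\<And>u. u \<in> V \<Longrightarrow> card {F \<in> S. u \<in> F} \<le> k"
  shows "card {F \<in> S. e \<subseteq> F} \<le> k"
proof -
  obtain v w where "e = {v, w}" "{v, w} \<in> S"
    using assms(3) unfolding skeleton1_edges_def by blast
  then have "v \<in> V" and "{F \<in> S. e \<subseteq> F} \<subseteq> {F \<in> S. v \<in> F}"
    using face_subset_vertices[OF K] by auto
  then have "card {F \<in> S. e \<subseteq> F} \<le> card {F \<in> S. v \<in> F}"
    using \<open>finite S\<close> by (intro card_mono) auto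
  also have "\<dots> \<le> k"
    using star \<open>v \<in> V\<close> .
  finally show ?thesis .
qed

lemma card_hit_faces_le_star_cut:
  fixes \<sigma> :: "'a \<Rightarrow> nat"
  assumes K: "abs_simplicial_complex V S" and "finite V" and "inj_on \<sigma> V"
    and star: "\<And>u. u \<in> V \<Longrightarrow> card {F \<in> S. u \<in> F} \<le> k"
  shows "card {F \<in> S. z \<in> (\<lambda>x. \<Sum>v\<in>V. x v * real (\<sigma> v)) ` closed_simplex V S F}
           \<le> k * (1 + card (edge_cut \<sigma> (skeleton1_edges S) (nat \<lceil>z\<rceil>)))"
proof -
  define U where "U = \<sigma> -` {nat \<lceil>z\<rceil>} \<inter> V"
  define C where "C = edge_cut \<sigma> (skeleton1_edges S) (nat \<lceil>z\<rceil>)"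
  have "finite S"
    using K assms(2) by (rule finite_faces)
  have "finite U" and "card U \<le> 1"
    using assms(2) card_vimage_inj_on_le[OF assms(3), of "{nat \<lceil>z\<rceil>}"] by (simp_all add: U_def)
  have "C \<subseteq> skeleton1_edges S"
    by (auto simp: C_def edge_cut_def)
  then have "C \<subseteq> S"
    by (auto simp: skeleton1_edges_def)
  then have "finite C"
    using \<open>finite S\<close> by (rule finite_subset)
  have "{F \<in> S. z \<in> (\<lambda>x. \<Sum>v\<in>V. x v * real (\<sigma> v)) ` closed_simplex V S F}
          \<subseteq> (\<Union>u\<in>U. {F \<in> S. u \<in> F}) \<union> (\<Union>e\<in>C. {F \<in> S. e \<subseteq> F})"
  proof
    fix F assume F: "F \<in> {F \<in> S. z \<in> (\<lambda>x. \<Sum>v\<in>V. x v * real (\<sigma> v)) ` closed_simplex V S F}"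
    then have "F \<subseteq> V"
      using face_subset_vertices[OF K] by blast
    then show "F \<in> (\<Union>u\<in>U. {F \<in> S. u \<in> F}) \<union> (\<Union>e\<in>C. {F \<in> S. e \<subseteq> F})"
      using hit_face_meets_cut[OF K assms(2), of z \<sigma> F] F unfolding U_def C_def by blast
  qed
  then have "card {F \<in> S. z \<in> (\<lambda>x. \<Sum>v\<in>V. x v * real (\<sigma> v)) ` closed_simplex V S F}
               \<le> card ((\<Union>u\<in>U. {F \<in> S. u \<in> F}) \<union> (\<Union>e\<in>C. {F \<in> S. e \<subseteq> F}))"
    using \<open>finite S\<close> \<open>finite U\<close> \<open>finite C\<close> by (intro card_mono) auto
  also have "\<dots> \<le> card (\<Union>u\<in>U. {F \<in> S. u \<in> F}) + card (\<Union>e\<in>C. {F \<in> S. e \<subseteq> F})"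
    by (rule card_Un_le)
  also have "\<dots> \<le> card U * k + card C * k"
    using card_UN_le_card_mult[OF \<open>finite U\<close>, of "\<lambda>u. {F \<in> S. u \<in> F}" k]
      card_UN_le_card_mult[OF \<open>finite C\<close>, of "\<lambda>e. {F \<in> S. e \<subseteq> F}" k]
      card_faces_containing_edge_le[OF K \<open>finite S\<close> _ star] star \<open>C \<subseteq> skeleton1_edges S\<close>
    by (force simp: U_def)
  also have "\<dots> \<le> k * (1 + card C)"
    using \<open>card U \<le> 1\<close> by (simp add: algebra_simps)
  finally show ?thesis
    unfolding C_def .
qed

lemma sTO_le_star_cutwidth:
  assumes K: "abs_simplicial_complex V S" and "finite V"
    and star: "\<And>u. u \<in> V \<Longrightarrow> card {F \<in> S. u \<in> F} \<le> k"
  shows "sTO V S TYPE(real) \<le> k * (1 + cutwidth V (skeleton1_edges S))"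
proof -
  let ?E = "skeleton1_edges S"
  have "\<forall>e\<in>?E. e \<subseteq> V"
    using face_subset_vertices[OF K] by (auto simp: skeleton1_edges_def)
  then obtain \<sigma> where \<sigma>: "bij_betw \<sigma> V {1..card V}"
    and cut: "\<And>i. card (edge_cut \<sigma> ?E i) \<le> cutwidth V ?E"
    by (rule cutwidth_attained[OF assms(2)]) blast
  define f where "f x = (\<Sum>v\<in>V. x v * real (\<sigma> v))" for x :: "'a \<Rightarrow> real"
  have "continuous_map (realisation_top V S) euclidean f"
    unfolding f_def realisation_top_def
    by (intro continuous_map_from_subtopology continuous_map_sum continuous_map_real_mult
        continuous_map_product_projection) (auto simp: assms(2))
  then have "sTO V S TYPE(real) \<le> sOv V S f"
    by (rule sTO_le_sOv)
  also have "\<dots> \<le> k * (1 + cutwidth V ?E)"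
  proof (rule sOv_le[OF K finite_faces[OF K assms(2)]])
    fix z
    have "card {F \<in> S. z \<in> f ` closed_simplex V S F} \<le> k * (1 + card (edge_cut \<sigma> ?E (nat \<lceil>z\<rceil>)))"
      unfolding f_def using \<sigma> star
      by (intro card_hit_faces_le_star_cut[OF K assms(2)]) (auto simp: bij_betw_def)
    also have "\<dots> \<le> k * (1 + cutwidth V ?E)"
      using cut by simp
    finally show "card {F \<in> S. z \<in> f ` closed_simplex V S F} \<le> k * (1 + cutwidth V ?E)" .
  qed
  finally show ?thesis .
qed

lemma star_subset_Pow_link:
  assumes "abs_simplicial_complex V S"
  shows "{F \<in> S. u \<in> F} \<subseteq> Pow (insert u {t. t \<noteq> u \<and> {u, t} \<in> S})"
proof
  fix F assume F: "F \<in> {F \<in> S. u \<in> F}"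
  then have "{u, t} \<in> S" if "t \<in> F" for t
    using subface_in_faces[OF assms, of F "{u, t}"] that by auto
  then show "F \<in> Pow (insert u {t. t \<noteq> u \<and> {u, t} \<in> S})"
    by auto
qed

lemma bounded_degree_imp_bounded_star:
  assumes "abs_simplicial_complex V S" and "bounded_degree V S"
  obtains k where "\<And>u S'. u \<in> V \<Longrightarrow> S' \<subseteq> S \<Longrightarrow> card {F \<in> S'. u \<in> F} \<le> k"
proof -
  obtain d where d: "\<forall>s\<in>V. finite {t. t \<noteq> s \<and> {s, t} \<in> S} \<and> card {t. t \<noteq> s \<and> {s, t} \<in> S} \<le> d"
    using assms(2) unfolding bounded_degree_def by blast
  have "card {F \<in> S'. u \<in> F} \<le> 2 ^ (d + 1)" if "u \<in> V" and "S' \<subseteq> S" for u S'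
  proof -
    let ?N = "insert u {t. t \<noteq> u \<and> {u, t} \<in> S}"
    have "finite ?N" and "card ?N \<le> d + 1"
      using d that(1) by (auto simp: card_insert_if)
    moreover have "{F \<in> S'. u \<in> F} \<subseteq> Pow ?N"
      using star_subset_Pow_link[OF assms(1), of u] that(2) by blast
    ultimately show ?thesis
      by (intro card_le_two_power_if_subset_Pow)
  qed
  then show thesis
    using that by blast
qed

lemma sTO_X_le_cw_X:
  assumes "abs_simplicial_complex V S"
    and star: "\<And>u S'. u \<in> V \<Longrightarrow> S' \<subseteq> S \<Longrightarrow> card {F \<in> S'. u \<in> F} \<le> k"
  shows "sTO_X V S TYPE(real) r \<le> k * (1 + cw_X V (skeleton1_edges S) r)"
proof (rule sTO_X_le)
  fix V' S' assume sub: "subcomplex V' S' V S" "finite V'" "card V' \<le> r"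
  then have "V' \<subseteq> V" "S' \<subseteq> S" "abs_simplicial_complex V' S'"
    by (simp_all add: subcomplex_def)
  then have "sTO V' S' TYPE(real) \<le> k * (1 + cutwidth V' (skeleton1_edges S'))"
    using sub(2) star by (intro sTO_le_star_cutwidth) auto
  also have "\<dots> \<le> k * (1 + cw_X V (skeleton1_edges S) r)"
    using cutwidth_le_cw_X[OF subgraph_skeleton1_edges[OF sub(1)] sub(2,3)] by simp
  finally show "sTO V' S' TYPE(real) \<le> k * (1 + cw_X V (skeleton1_edges S) r)" .
qed

lemma cw_X_le_sTO_X:
  assumes "abs_simplicial_complex V S"
  shows "cw_X V (skeleton1_edges S) r \<le> sTO_X V S TYPE(real) r"
proof (rule cw_X_le)
  fix V' E' assume sub: "subgraph V' E' V (skeleton1_edges S)" "finite V'" "card V' \<le> r"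
  then have "cutwidth V' E' \<le> sTO V' (graph_complex V' E') TYPE(real)"
    by (intro cutwidth_le_sTO_graph_complex) (auto simp: subgraph_def)
  also have "\<dots> \<le> sTO_X V S TYPE(real) r"
    using subcomplex_graph_complex[OF assms sub(1,2)] sub(2,3) by (rule sTO_le_sTO_X)
  finally show "cutwidth V' E' \<le> sTO_X V S TYPE(real) r" .
qed

theorem theorem1p4:
  fixes V :: "'a set" and S :: "'a set set"
  assumes "abs_simplicial_complex V S" and "bounded_degree V S"
  shows "asymp_equiv_fun (sTO_X V S TYPE(real)) (cw_X V (skeleton1_edges S))"
proof -
  obtain k where star: "\<And>u S'. u \<in> V \<Longrightarrow> S' \<subseteq> S \<Longrightarrow> card {F \<in> S'. u \<in> F} \<le> k"
    using bounded_degree_imp_bounded_star[OF assms] by blast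
  have "sTO_X V S TYPE(real) r \<le> Suc k * cw_X V (skeleton1_edges S) (Suc k * r) + Suc k" for r
  proof -
    have "sTO_X V S TYPE(real) r \<le> k * (1 + cw_X V (skeleton1_edges S) r)"
      using assms(1) star by (rule sTO_X_le_cw_X)
    also have "\<dots> \<le> k * (1 + cw_X V (skeleton1_edges S) (Suc k * r))"
      by (intro mult_le_mono2 add_left_mono cw_X_mono) simp
    also have "\<dots> \<le> Suc k * cw_X V (skeleton1_edges S) (Suc k * r) + Suc k"
      by (simp add: algebra_simps)
    finally show ?thesis .
  qed
  moreover have "cw_X V (skeleton1_edges S) r \<le> 1 * sTO_X V S TYPE(real) (1 * r) + 1" for r
    using cw_X_le_sTO_X[OF assms(1)] by (simp add: le_SucI)
  ultimately show ?thesis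
    unfolding asymp_equiv_fun_def lesssim_def by blast
qed

end
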